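(* Let $a\in\mathbb{R}$, $b\in(a,\infty)$, $h\in\mathbb{N}$, $v_1,\dots,v_h,w_1,\dots,w_h\in(0,\infty)$, let $f,p\in C(\mathbb{R},\mathbb{R})$ satisfy for all $x\in\mathbb{R}$ that $p(x)\ge0$ and $p^{-1}((0,\infty))=(a,b)$, with $\mathcal{L}$ and $I_k^\theta$ as in the context. Let $\Theta\in C([0,\infty),\mathbb{R}^{h+1})$ satisfy for all $t\in[0,\infty)$ that $\Theta_t=\Theta_0-\int_0^t(\nabla\mathcal{L})(\Theta_s)\,\mathrm{d}s$, and let $k\in\{1,\dots,h\}$ satisfy $I_k^{\Theta_0}\neq\emptyset$. Then for all $t\in[0,\infty)$ it holds that $I_k^{\Theta_t}\neq\emptyset$.
   Context: Let $\mathfrak{c}(x)=\min\{\max\{x,0\},1\}$. For $\theta=(\theta_1,\dots,\theta_{h+1})\in\mathbb{R}^{h+1}$ and $i\in\{1,\dots,h\}$ let $\psi_i(\theta)=-[w_i]^{-1}\theta_i$, $I_i^\theta=(\psi_i(\theta),\psi_i(\theta)+[w_i]^{-1})\cap(a,b)$, $\mathcal{N}^\theta(x)=\theta_{h+1}+\sum_{i=1}^hv_i\mathfrak{c}(w_ix+\theta_i)$, and $\mathcal{L}(\theta)=\int_a^b(\mathcal{N}^\theta(x)-f(x))^2p(x)\,\mathrm{d}x$ ($\mathcal{L}$ is continuously differentiable). *)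

theory Defs
  imports "HOL-Analysis.Analysis"
begin

text \<open>Parameter vectors theta in R^(h+1) are represented as functions nat => real,
  with the relevant components indexed by 1..h+1.\<close>

definition clip :: "real \<Rightarrow> real" where
  "clip x = min (max x 0) 1"

definition psi :: "(nat \<Rightarrow> real) \<Rightarrow> (nat \<Rightarrow> real) \<Rightarrow> nat \<Rightarrow> real" where
  "psi w \<theta> i = - (1 / w i) * \<theta> i"

definition Iset :: "real \<Rightarrow> real \<Rightarrow> (nat \<Rightarrow> real) \<Rightarrow> (nat \<Rightarrow> real) \<Rightarrow> nat \<Rightarrow> real set" where
  "Iset a b w \<theta> i = {psi w \<theta> i <..< psi w \<theta> i + 1 / w i} \<inter> {a<..<b}"

definition realiz :: "nat \<Rightarrow> (nat \<Rightarrow> real) \<Rightarrow> (nat \<Rightarrow> real) \<Rightarrow> (nat \<Rightarrow> real) \<Rightarrow> real \<Rightarrow> real" where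
  "realiz h v w \<theta> x = \<theta> (h + 1) + (\<Sum>i = 1..h. v i * clip (w i * x + \<theta> i))"

definition risk :: "real \<Rightarrow> real \<Rightarrow> nat \<Rightarrow> (nat \<Rightarrow> real) \<Rightarrow> (nat \<Rightarrow> real)
    \<Rightarrow> (real \<Rightarrow> real) \<Rightarrow> (real \<Rightarrow> real) \<Rightarrow> (nat \<Rightarrow> real) \<Rightarrow> real" where
  "risk a b h v w f p \<theta> = integral {a..b} (\<lambda>x. (realiz h v w \<theta> x - f x)^2 * p x)"

definition grad :: "((nat \<Rightarrow> real) \<Rightarrow> real) \<Rightarrow> (nat \<Rightarrow> real) \<Rightarrow> nat \<Rightarrow> real" where
  "grad L \<theta> i = deriv (\<lambda>s. L (\<theta>(i := \<theta> i + s))) 0"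

end

theory Submission
  imports Defs
begin

(* Write z(t) for the k-th coordinate of Theta_t. The partial derivative of the risk in direction
   k is the integral of 2 v_k (N - f) p over those x in [a,b] where neuron k is in its linear
   regime 0 <= w_k x + theta_k <= 1. The interval I_k^theta is nonempty exactly when theta_k lies
   in (-w_k b, 1 - w_k a), and then the linear regime inside [a,b] has length at most the distance
   of theta_k to the boundary of this interval, divided by w_k. Hence on every bounded time
   interval |z'| is at most a constant times the distance of z to the boundary, and a
   Gronwall-type argument shows that z cannot reach the boundary in finite time. *)

lemma clip_nonneg: "0 \<le> clip x"
  and clip_le_one: "clip x \<le> 1"
  and abs_clip_diff_le: "\<bar>clip x - clip y\<bar> \<le> \<bar>x - y\<bar>"
  by (auto simp: clip_def)

lemma continuous_on_clip [continuous_intros]: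
  "continuous_on S g \<Longrightarrow> continuous_on S (\<lambda>x. clip (g x))"
  unfolding clip_def by (intro continuous_intros)

lemma clip_linearization_error:
  "\<bar>clip (y + s) - clip y - s * indicator {0..1} y\<bar>
     \<le> \<bar>s\<bar> * (indicator {-\<bar>s\<bar>..\<bar>s\<bar>} y + indicator {1-\<bar>s\<bar>..1+\<bar>s\<bar>} y)"
  by (auto simp: clip_def indicator_def abs_if min_def max_def)

lemma mult_indicator_affine_eq_if:
  fixes g :: "real \<Rightarrow> real" and w :: real
  assumes "0 < w"
  shows "g x * indicator {l..u} (w * x + \<theta>)
           = (if x \<in> {(l - \<theta>) / w..(u - \<theta>) / w} then g x else 0)"
  using assms by (auto simp: indicator_def field_simps)

lemma integrable_on_mult_indicator_affine:
  fixes g :: "real \<Rightarrow> real"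
  assumes "continuous_on {a..b} g" "0 < w"
  shows "(\<lambda>x. g x * indicator {l..u} (w * x + \<theta>)) integrable_on {a..b}"
proof -
  let ?L = "(l - \<theta>) / w" and ?U = "(u - \<theta>) / w"
  have "g integrable_on {max a ?L..min b ?U}"
    by (rule integrable_continuous_real, rule continuous_on_subset[OF assms(1)]) auto
  moreover have "{max a ?L..min b ?U} = {?L..?U} \<inter> {a..b}"
    by auto
  ultimately show ?thesis
    unfolding mult_indicator_affine_eq_if[OF assms(2)] integrable_restrict_Int by simp
qed

lemma integrable_on_indicator_affine:
  fixes w :: real
  assumes "0 < w"
  shows "(\<lambda>x. indicator {l..u} (w * x + \<theta>) :: real) integrable_on {a..b}"
  using integrable_on_mult_indicator_affine[of a b "\<lambda>x. 1" w] assms by simp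

lemma integral_indicator_affine:
  fixes w :: real
  assumes "0 < w"
  shows "integral {a..b} (\<lambda>x. indicator {l..u} (w * x + \<theta>))
           = max 0 (min b ((u - \<theta>) / w) - max a ((l - \<theta>) / w))"
proof -
  let ?L = "(l - \<theta>) / w" and ?U = "(u - \<theta>) / w"
  have "integral {a..b} (\<lambda>x. indicator {l..u} (w * x + \<theta>))
          = integral ({?L..?U} \<inter> {a..b}) (\<lambda>x. 1 :: real)"
    using mult_indicator_affine_eq_if[OF assms, of "\<lambda>x. 1"]
    unfolding integral_restrict_Int[symmetric] by simp
  also have "{?L..?U} \<inter> {a..b} = {max a ?L..min b ?U}"
    by auto
  finally show ?thesis
    by (auto simp: min_def max_def)
qed

lemma integral_indicator_affine_le:
  fixes w :: real
  assumes "0 < w" "l \<le> u"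
  shows "integral {a..b} (\<lambda>x. indicator {l..u} (w * x + \<theta>)) \<le> (u - l) / w"
proof -
  have "(u - \<theta>) / w - (l - \<theta>) / w = (u - l) / w"
    by (simp add: diff_divide_distrib)
  moreover have "0 \<le> (u - l) / w"
    using assms by simp
  ultimately show ?thesis
    unfolding integral_indicator_affine[OF assms(1)] by linarith
qed

lemma integral_clip_kink_bands_le:
  fixes w :: real
  assumes "0 < w"
  shows "integral {a..b} (\<lambda>x. indicator {-\<bar>s\<bar>..\<bar>s\<bar>} (w * x + \<theta>)
                              + indicator {1-\<bar>s\<bar>..1+\<bar>s\<bar>} (w * x + \<theta>)) \<le> 4 * \<bar>s\<bar> / w"
  using integral_indicator_affine_le[OF assms, of "-\<bar>s\<bar>" "\<bar>s\<bar>" a b \<theta>]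
    integral_indicator_affine_le[OF assms, of "1-\<bar>s\<bar>" "1+\<bar>s\<bar>" a b \<theta>]
  by (simp add: integral_add integrable_on_indicator_affine assms)

lemma DERIV_of_quadratic_remainder:
  fixes \<Phi> :: "real \<Rightarrow> real"
  assumes "0 < \<delta>" "\<And>s. \<bar>s\<bar> < \<delta> \<Longrightarrow> \<bar>\<Phi> (x + s) - \<Phi> x - s * D\<bar> \<le> K * s\<^sup>2"
  shows "(\<Phi> has_real_derivative D) (at x)"
  unfolding DERIV_def
proof (rule LIM_zero_cancel, rule Lim_null_comparison)
  show "((\<lambda>s. \<bar>K\<bar> * \<bar>s\<bar>) \<longlongrightarrow> 0) (at 0)"
    by (auto intro!: tendsto_eq_intros)
  have "\<bar>(\<Phi> (x + s) - \<Phi> x) / s - D\<bar> \<le> \<bar>K\<bar> * \<bar>s\<bar>" if "s \<noteq> 0" "\<bar>s\<bar> < \<delta>" for s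
  proof -
    have "\<bar>(\<Phi> (x + s) - \<Phi> x) / s - D\<bar> = \<bar>\<Phi> (x + s) - \<Phi> x - s * D\<bar> / \<bar>s\<bar>"
      using that(1) by (simp add: field_simps flip: abs_divide)
    also have "\<dots> \<le> K * s\<^sup>2 / \<bar>s\<bar>"
      by (rule divide_right_mono[OF assms(2)[OF that(2)]]) simp
    also have "\<dots> = K * \<bar>s\<bar>"
      using that(1) by (simp add: power2_eq_square abs_mult_self_eq[symmetric, of s] del: abs_mult_self_eq)
    also have "\<dots> \<le> \<bar>K\<bar> * \<bar>s\<bar>"
      by (simp add: mult_right_mono)
    finally show ?thesis .
  qed
  then show "\<forall>\<^sub>F s in at 0. norm ((\<Phi> (x + s) - \<Phi> x) / s - D) \<le> \<bar>K\<bar> * \<bar>s\<bar>"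
    unfolding eventually_at using assms(1) by (auto intro!: exI[of _ \<delta>])
qed

lemma continuous_on_interval_abs_bound:
  fixes g :: "real \<Rightarrow> real"
  assumes "continuous_on {a..b} g"
  obtains B where "\<And>x. x \<in> {a..b} \<Longrightarrow> \<bar>g x\<bar> \<le> B"
proof -
  obtain B where "\<And>x. x \<in> {a..b} \<Longrightarrow> norm (g x) \<le> B"
    using continuous_on_compact_bound[OF compact_Icc assms] by blast
  then have "\<And>x. x \<in> {a..b} \<Longrightarrow> \<bar>g x\<bar> \<le> B"
    by simp
  then show ?thesis
    by (rule that)
qed

lemma square_clip_remainder_le:
  fixes A G v y s :: real
  assumes "\<bar>A + v * clip y\<bar> \<le> C" "\<bar>G\<bar> \<le> M"
  shows "\<bar>(A + v * clip (y + s))\<^sup>2 * G - (A + v * clip y)\<^sup>2 * G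
            - s * (2 * v * (A + v * clip y) * G * indicator {0..1} y)\<bar>
         \<le> 2 * \<bar>v\<bar> * C * M * \<bar>s\<bar> * (indicator {-\<bar>s\<bar>..\<bar>s\<bar>} y + indicator {1-\<bar>s\<bar>..1+\<bar>s\<bar>} y)
            + v\<^sup>2 * s\<^sup>2 * M"
proof -
  define \<delta> where "\<delta> = clip (y + s) - clip y"
  define r where "r = \<delta> - s * indicator {0..1} y"
  define I :: real where "I = indicator {-\<bar>s\<bar>..\<bar>s\<bar>} y + indicator {1-\<bar>s\<bar>..1+\<bar>s\<bar>} y"
  have "(A + v * clip (y + s))\<^sup>2 * G - (A + v * clip y)\<^sup>2 * G
          - s * (2 * v * (A + v * clip y) * G * indicator {0..1} y)
        = 2 * v * (A + v * clip y) * G * r + v\<^sup>2 * \<delta>\<^sup>2 * G"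
    unfolding r_def \<delta>_def by (simp add: algebra_simps power2_eq_square)
  moreover have "\<bar>2 * v * (A + v * clip y) * G * r\<bar> \<le> 2 * \<bar>v\<bar> * C * M * (\<bar>s\<bar> * I)"
    using assms clip_linearization_error[of y s] unfolding r_def \<delta>_def I_def abs_mult
    by (intro mult_mono) auto
  moreover have "\<bar>v\<^sup>2 * \<delta>\<^sup>2 * G\<bar> \<le> v\<^sup>2 * s\<^sup>2 * M"
    using assms abs_clip_diff_le[of "y + s" y] unfolding \<delta>_def abs_mult
    by (intro mult_mono) (auto simp: abs_le_square_iff)
  ultimately show ?thesis
    unfolding I_def[symmetric]
    using abs_triangle_ineq[of "2 * v * (A + v * clip y) * G * r" "v\<^sup>2 * \<delta>\<^sup>2 * G"]
    by (simp add: ac_simps)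
qed

(* clip is affine off the bands of width 2|s| around its kinks 0 and 1; these bands carry the
   whole linearization error but have measure O(s), so the remainder is O(s^2). *)
lemma integral_square_clip_remainder_le:
  fixes A G :: "real \<Rightarrow> real"
  assumes A: "continuous_on {a..b} A" and G: "continuous_on {a..b} G" and w: "0 < w" and "a \<le> b"
    and C: "\<And>x. x \<in> {a..b} \<Longrightarrow> \<bar>A x + v * clip (w * x + \<theta>)\<bar> \<le> C"
    and M: "\<And>x. x \<in> {a..b} \<Longrightarrow> \<bar>G x\<bar> \<le> M"
  shows "\<bar>integral {a..b} (\<lambda>x. (A x + v * clip (w * x + \<theta> + s))\<^sup>2 * G x)
            - integral {a..b} (\<lambda>x. (A x + v * clip (w * x + \<theta>))\<^sup>2 * G x)
            - s * integral {a..b} (\<lambda>x. 2 * v * (A x + v * clip (w * x + \<theta>)) * G x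
                                          * indicator {0..1} (w * x + \<theta>))\<bar>
         \<le> (8 * \<bar>v\<bar> * C * M / w + v\<^sup>2 * M * (b - a)) * s\<^sup>2" (is "?lhs \<le> ?rhs")
proof -
  define I :: "real \<Rightarrow> real"
    where "I x = indicator {-\<bar>s\<bar>..\<bar>s\<bar>} (w * x + \<theta>) + indicator {1-\<bar>s\<bar>..1+\<bar>s\<bar>} (w * x + \<theta>)" for x
  define R where "R x = (A x + v * clip (w * x + \<theta> + s))\<^sup>2 * G x - (A x + v * clip (w * x + \<theta>))\<^sup>2 * G x
      - s * (2 * v * (A x + v * clip (w * x + \<theta>)) * G x * indicator {0..1} (w * x + \<theta>))" for x
  have "0 \<le> C" "0 \<le> M"
    using C[of a] M[of a] \<open>a \<le> b\<close> by (auto intro: order_trans[OF abs_ge_zero])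
  have int_I: "I integrable_on {a..b}"
    unfolding I_def by (intro integrable_add integrable_on_indicator_affine w)
  have int_Q: "(\<lambda>x. (A x + v * clip (w * x + \<theta> + s'))\<^sup>2 * G x) integrable_on {a..b}" for s'
    by (intro integrable_continuous_real continuous_intros A G)
  have int_D: "(\<lambda>x. 2 * v * (A x + v * clip (w * x + \<theta>)) * G x * indicator {0..1} (w * x + \<theta>))
      integrable_on {a..b}"
    by (rule integrable_on_mult_indicator_affine[OF _ w]) (intro continuous_intros A G)
  have "?lhs = \<bar>integral {a..b} R\<bar>"
    using int_Q[of s] int_Q[of 0] int_D unfolding R_def
    by (simp add: integral_diff integrable_diff integrable_on_mult_right)
  also have "\<dots> \<le> integral {a..b} (\<lambda>x. 2 * \<bar>v\<bar> * C * M * \<bar>s\<bar> * I x + v\<^sup>2 * s\<^sup>2 * M)"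
  proof (rule integral_norm_bound_integral[where f = R, simplified])
    show "R integrable_on {a..b}"
      using int_Q[of s] int_Q[of 0] int_D unfolding R_def
      by (simp add: integrable_diff integrable_on_mult_right)
    show "(\<lambda>x. 2 * \<bar>v\<bar> * C * M * \<bar>s\<bar> * I x + v\<^sup>2 * s\<^sup>2 * M) integrable_on {a..b}"
      by (intro integrable_add integrable_on_mult_right int_I integrable_const_ivl)
    show "\<bar>R x\<bar> \<le> 2 * \<bar>v\<bar> * C * M * \<bar>s\<bar> * I x + v\<^sup>2 * s\<^sup>2 * M" if "x \<in> {a..b}" for x
      using square_clip_remainder_le[OF C[OF that] M[OF that], of s] unfolding R_def I_def
      by (simp add: add.assoc)
  qed
  also have "\<dots> = 2 * \<bar>v\<bar> * C * M * \<bar>s\<bar> * integral {a..b} I + v\<^sup>2 * s\<^sup>2 * M * (b - a)"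
    using \<open>a \<le> b\<close>
    by (subst integral_add) (auto intro: integrable_on_mult_right int_I)
  also have "\<dots> \<le> 2 * \<bar>v\<bar> * C * M * \<bar>s\<bar> * (4 * \<bar>s\<bar> / w) + v\<^sup>2 * s\<^sup>2 * M * (b - a)"
  proof -
    have "integral {a..b} I \<le> 4 * \<bar>s\<bar> / w"
      unfolding I_def by (rule integral_clip_kink_bands_le[OF w])
    moreover have "0 \<le> 2 * \<bar>v\<bar> * C * M * \<bar>s\<bar>"
      using \<open>0 \<le> C\<close> \<open>0 \<le> M\<close> by simp
    ultimately show ?thesis
      by (simp only: add_right_mono mult_left_mono)
  qed
  also have "\<dots> = ?rhs"
    by (simp add: algebra_simps power2_eq_square)
  finally show ?thesis .
qed

lemma has_real_derivative_integral_square_clip: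
  fixes A G :: "real \<Rightarrow> real"
  assumes A: "continuous_on {a..b} A" and G: "continuous_on {a..b} G" and w: "0 < w" and "a \<le> b"
  shows "((\<lambda>s. integral {a..b} (\<lambda>x. (A x + v * clip (w * x + \<theta> + s))\<^sup>2 * G x)) has_real_derivative
           integral {a..b} (\<lambda>x. 2 * v * (A x + v * clip (w * x + \<theta>)) * G x
                                    * indicator {0..1} (w * x + \<theta>))) (at 0)"
proof -
  have "continuous_on {a..b} (\<lambda>x. A x + v * clip (w * x + \<theta>))"
    by (intro continuous_intros A)
  then obtain C where C: "\<And>x. x \<in> {a..b} \<Longrightarrow> \<bar>A x + v * clip (w * x + \<theta>)\<bar> \<le> C"
    using continuous_on_interval_abs_bound by blast
  obtain M where M: "\<And>x. x \<in> {a..b} \<Longrightarrow> \<bar>G x\<bar> \<le> M"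
    using continuous_on_interval_abs_bound[OF G] by blast
  define \<Phi> where "\<Phi> s = integral {a..b} (\<lambda>x. (A x + v * clip (w * x + \<theta> + s))\<^sup>2 * G x)" for s
  have "\<bar>\<Phi> (0 + s) - \<Phi> 0 - s * integral {a..b} (\<lambda>x. 2 * v * (A x + v * clip (w * x + \<theta>)) * G x
                                    * indicator {0..1} (w * x + \<theta>))\<bar>
        \<le> (8 * \<bar>v\<bar> * C * M / w + v\<^sup>2 * M * (b - a)) * s\<^sup>2" for s
    using integral_square_clip_remainder_le[OF A G w \<open>a \<le> b\<close> C M, of s]
    unfolding \<Phi>_def by (simp only: add_0 add_0_right)
  then have "(\<Phi> has_real_derivative integral {a..b} (\<lambda>x. 2 * v * (A x + v * clip (w * x + \<theta>)) * G x
                                    * indicator {0..1} (w * x + \<theta>))) (at 0)"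
    by (intro DERIV_of_quadratic_remainder[OF zero_less_one])
  then show ?thesis
    unfolding \<Phi>_def .
qed

lemma continuous_on_realiz [continuous_intros]: "continuous_on S (realiz h v w \<theta>)"
  unfolding realiz_def by (intro continuous_intros)

lemma abs_realiz_le: "\<bar>realiz h v w \<theta> x\<bar> \<le> \<bar>\<theta> (h + 1)\<bar> + (\<Sum>i = 1..h. \<bar>v i\<bar>)"
proof -
  have "\<bar>\<Sum>i = 1..h. v i * clip (w i * x + \<theta> i)\<bar> \<le> (\<Sum>i = 1..h. \<bar>v i\<bar>)"
    using clip_nonneg clip_le_one
    by (intro order_trans[OF sum_abs sum_mono]) (simp add: abs_mult mult_left_le)
  then show ?thesis
    unfolding realiz_def by linarith
qed

lemma realiz_update_hidden:
  assumes "k \<in> {1..h}"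
  shows "realiz h v w (\<theta>(k := \<theta> k + s)) x
           = realiz h v w \<theta> x - v k * clip (w k * x + \<theta> k) + v k * clip (w k * x + \<theta> k + s)"
proof -
  have "h + 1 \<noteq> k" and k: "k \<in> {1..h}"
    using assms by auto
  let ?\<theta>' = "\<theta>(k := \<theta> k + s)"
  have "(\<Sum>i = 1..h. v i * clip (w i * x + ?\<theta>' i))
          = v k * clip (w k * x + ?\<theta>' k) + (\<Sum>i \<in> {1..h} - {k}. v i * clip (w i * x + ?\<theta>' i))"
    by (rule sum.remove[OF _ k]) simp
  also have "(\<Sum>i \<in> {1..h} - {k}. v i * clip (w i * x + ?\<theta>' i))
          = (\<Sum>i \<in> {1..h} - {k}. v i * clip (w i * x + \<theta> i))"
    by (rule sum.cong) auto
  finally have "(\<Sum>i = 1..h. v i * clip (w i * x + ?\<theta>' i))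
          = v k * clip (w k * x + \<theta> k + s) + (\<Sum>i \<in> {1..h} - {k}. v i * clip (w i * x + \<theta> i))"
    by (simp add: add.assoc)
  moreover have "(\<Sum>i = 1..h. v i * clip (w i * x + \<theta> i))
          = v k * clip (w k * x + \<theta> k) + (\<Sum>i \<in> {1..h} - {k}. v i * clip (w i * x + \<theta> i))"
    by (rule sum.remove[OF _ k]) simp
  ultimately show ?thesis
    using \<open>h + 1 \<noteq> k\<close> unfolding realiz_def by simp
qed

lemma grad_risk_hidden:
  assumes k: "k \<in> {1..h}" and w: "0 < w k" and "a \<le> b"
    and f: "continuous_on {a..b} f" and p: "continuous_on {a..b} p"
  shows "grad (risk a b h v w f p) \<theta> k
           = integral {a..b} (\<lambda>x. 2 * v k * (realiz h v w \<theta> x - f x) * p x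
                                    * indicator {0..1} (w k * x + \<theta> k))"
proof -
  define A where "A x = realiz h v w \<theta> x - f x - v k * clip (w k * x + \<theta> k)" for x
  have A_update: "A x + v k * clip (w k * x + \<theta> k + s) = realiz h v w (\<theta>(k := \<theta> k + s)) x - f x"
    for x s
    unfolding A_def realiz_update_hidden[OF k] by simp
  have A_0: "A x + v k * clip (w k * x + \<theta> k) = realiz h v w \<theta> x - f x" for x
    unfolding A_def by simp
  have "continuous_on {a..b} A"
    unfolding A_def by (intro continuous_intros f)
  from has_real_derivative_integral_square_clip[OF this p w \<open>a \<le> b\<close>, of "v k" "\<theta> k"]
  have "((\<lambda>s. risk a b h v w f p (\<theta>(k := \<theta> k + s))) has_real_derivative
          integral {a..b} (\<lambda>x. 2 * v k * (realiz h v w \<theta> x - f x) * p x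
                                  * indicator {0..1} (w k * x + \<theta> k))) (at 0)"
    unfolding risk_def A_update A_0 .
  then show ?thesis
    unfolding grad_def by (rule DERIV_imp_deriv)
qed

lemma abs_grad_risk_hidden_le:
  assumes k: "k \<in> {1..h}" and w: "0 < w k" and "a \<le> b"
    and f: "continuous_on {a..b} f" and p: "continuous_on {a..b} p"
    and M: "\<And>x. x \<in> {a..b} \<Longrightarrow> \<bar>(realiz h v w \<theta> x - f x) * p x\<bar> \<le> M"
  shows "\<bar>grad (risk a b h v w f p) \<theta> k\<bar>
           \<le> 2 * \<bar>v k\<bar> * M / w k * max 0 (min (\<theta> k + w k * b) (1 - w k * a - \<theta> k))"
proof -
  have "0 \<le> M"
    using M[of a] \<open>a \<le> b\<close> by (auto intro: order_trans[OF abs_ge_zero])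
  have int_grad: "(\<lambda>x. 2 * v k * (realiz h v w \<theta> x - f x) * p x * indicator {0..1} (w k * x + \<theta> k))
            integrable_on {a..b}"
    by (intro integrable_on_mult_indicator_affine w continuous_intros f p)
  have int_bound: "(\<lambda>x. 2 * \<bar>v k\<bar> * M * indicator {0..1} (w k * x + \<theta> k)) integrable_on {a..b}"
    by (intro integrable_on_mult_indicator_affine w continuous_intros)
  have "norm (2 * v k * (realiz h v w \<theta> x - f x) * p x * indicator {0..1} (w k * x + \<theta> k))
            \<le> 2 * \<bar>v k\<bar> * M * indicator {0..1} (w k * x + \<theta> k)" if "x \<in> {a..b}" for x
    using M[OF that] by (simp add: abs_mult mult_left_mono indicator_def)
  then have "\<bar>grad (risk a b h v w f p) \<theta> k\<bar>
          \<le> integral {a..b} (\<lambda>x. 2 * \<bar>v k\<bar> * M * indicator {0..1} (w k * x + \<theta> k))"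
    unfolding grad_risk_hidden[where w = w and k = k, OF k w \<open>a \<le> b\<close> f p]
    using integral_norm_bound_integral[OF int_grad int_bound] by simp
  also have "\<dots> = 2 * \<bar>v k\<bar> * M * max 0 (min b ((1 - \<theta> k) / w k) - max a ((0 - \<theta> k) / w k))"
    by (simp add: integral_indicator_affine[OF w])
  also have "\<dots> \<le> 2 * \<bar>v k\<bar> * M * (max 0 (min (\<theta> k + w k * b) (1 - w k * a - \<theta> k)) / w k)"
  proof (rule mult_left_mono)
    have "(\<theta> k + w k * b) / w k = b - (0 - \<theta> k) / w k"
      and "(1 - w k * a - \<theta> k) / w k = (1 - \<theta> k) / w k - a"
      using w by (simp_all add: field_simps)
    then have "max 0 (min (\<theta> k + w k * b) (1 - w k * a - \<theta> k)) / w k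
                 = max 0 (min (b - (0 - \<theta> k) / w k) ((1 - \<theta> k) / w k - a))"
      using w by (simp add: max_divide_distrib_right min_divide_distrib_right)
    then show "max 0 (min b ((1 - \<theta> k) / w k) - max a ((0 - \<theta> k) / w k))
                 \<le> max 0 (min (\<theta> k + w k * b) (1 - w k * a - \<theta> k)) / w k"
      by (simp add: min_def max_def)
  qed (use \<open>0 \<le> M\<close> in simp)
  finally show ?thesis
    by simp
qed

lemma weighted_residual_bounded:
  fixes \<Theta> :: "real \<Rightarrow> nat \<Rightarrow> real"
  assumes \<Theta>: "continuous_on {0..T} (\<lambda>t. \<Theta> t (h + 1))"
    and f: "continuous_on {a..b} f" and p: "continuous_on {a..b} p"
  obtains M where "\<And>t x. t \<in> {0..T} \<Longrightarrow> x \<in> {a..b} \<Longrightarrow> \<bar>(realiz h v w (\<Theta> t) x - f x) * p x\<bar> \<le> M"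
proof -
  obtain B where B: "\<And>t. t \<in> {0..T} \<Longrightarrow> \<bar>\<Theta> t (h + 1)\<bar> \<le> B"
    using continuous_on_interval_abs_bound[OF \<Theta>] by blast
  obtain F where F: "\<And>x. x \<in> {a..b} \<Longrightarrow> \<bar>f x\<bar> \<le> F"
    using continuous_on_interval_abs_bound[OF f] by blast
  obtain P where P: "\<And>x. x \<in> {a..b} \<Longrightarrow> \<bar>p x\<bar> \<le> P"
    using continuous_on_interval_abs_bound[OF p] by blast
  have "\<bar>(realiz h v w (\<Theta> t) x - f x) * p x\<bar> \<le> (B + (\<Sum>i = 1..h. \<bar>v i\<bar>) + F) * P"
    if "t \<in> {0..T}" "x \<in> {a..b}" for t x
  proof -
    have "\<bar>realiz h v w (\<Theta> t) x - f x\<bar> \<le> B + (\<Sum>i = 1..h. \<bar>v i\<bar>) + F"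
      using abs_realiz_le[of h v w "\<Theta> t" x] B[OF that(1)] F[OF that(2)] by linarith
    then show ?thesis
      unfolding abs_mult using P[OF that(2)] by (intro mult_mono) auto
  qed
  then show ?thesis
    by (rule that)
qed

lemma Iset_nonempty_iff:
  assumes "a < b" "0 < w k"
  shows "Iset a b w \<theta> k \<noteq> {} \<longleftrightarrow> - w k * b < \<theta> k \<and> \<theta> k < 1 - w k * a"
proof -
  have "Iset a b w \<theta> k = {max (- \<theta> k / w k) a <..< min ((1 - \<theta> k) / w k) b}"
    unfolding Iset_def psi_def by (auto simp: diff_divide_distrib)
  also have "\<dots> \<noteq> {} \<longleftrightarrow> - \<theta> k / w k < b \<and> a < (1 - \<theta> k) / w k"
    using assms divide_strict_right_mono[of "- \<theta> k" "1 - \<theta> k" "w k"]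
    by (auto simp: min_def max_def)
  also have "\<dots> \<longleftrightarrow> - w k * b < \<theta> k \<and> \<theta> k < 1 - w k * a"
    using assms(2) by (auto simp: field_simps)
  finally show ?thesis .
qed

lemma first_exit_time:
  fixes z :: "real \<Rightarrow> 'a::topological_space"
  assumes "continuous_on {0..T} z" "open U" "z 0 \<in> U" "0 \<le> T" "z T \<notin> U"
  obtains t1 where "0 < t1" "t1 \<le> T" "z t1 \<notin> U" "\<And>t. 0 \<le> t \<Longrightarrow> t < t1 \<Longrightarrow> z t \<in> U"
proof -
  define S where "S = {0..T} \<inter> z -` (- U)"
  have "closed S"
    unfolding S_def using assms(1,2) by (intro continuous_closed_preimage) auto
  moreover have "T \<in> S" and "bdd_below S"
    using assms(4,5) unfolding S_def by (auto intro: bdd_belowI[of _ 0])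
  ultimately have "Inf S \<in> S"
    using closed_contains_Inf by blast
  have "z t \<in> U" if "0 \<le> t" "t < Inf S" for t
  proof (rule ccontr)
    assume "z t \<notin> U"
    with that \<open>Inf S \<in> S\<close> have "t \<in> S"
      unfolding S_def by auto
    then show False
      using cInf_lower[OF _ \<open>bdd_below S\<close>] that(2) by fastforce
  qed
  moreover have "Inf S \<noteq> 0"
    using \<open>Inf S \<in> S\<close> assms(3) unfolding S_def by auto
  ultimately show ?thesis
    using \<open>Inf S \<in> S\<close> that[of "Inf S"] unfolding S_def by fastforce
qed

lemma has_integral_interval_of_primitive:
  fixes g :: "real \<Rightarrow> 'a::banach"
  assumes "(g has_integral F s) {a..s}" "(g has_integral F t) {a..t}" "a \<le> s" "s \<le> t"
  shows "(g has_integral (F t - F s)) {s..t}"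
proof -
  have "g integrable_on {s..t}"
    using integrable_subinterval_real[OF has_integral_integrable[OF assms(2)]] assms(3) by simp
  then have "(g has_integral integral {s..t} g) {s..t}"
    by (rule integrable_integral)
  with has_integral_combine[OF assms(3,4) assms(1)]
  have "(g has_integral (F s + integral {s..t} g)) {a..t}" .
  then have "F s + integral {s..t} g = F t"
    using assms(2) by (rule has_integral_unique)
  with \<open>(g has_integral integral {s..t} g) {s..t}\<close> show ?thesis
    by (metis add_diff_cancel_left')
qed

lemma inside_at_first_exit_of_linear_speed_bound:
  fixes z g :: "real \<Rightarrow> real"
  assumes "0 < t1" and z: "continuous_on {0..t1} z"
    and inside: "\<And>t. 0 \<le> t \<Longrightarrow> t < t1 \<Longrightarrow> lo < z t \<and> z t < hi"
    and g: "\<And>t. t \<in> {0..t1} \<Longrightarrow> (g has_integral (z 0 - z t)) {0..t}"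
    and speed: "\<And>t. t \<in> {0..t1} \<Longrightarrow> \<bar>g t\<bar> \<le> K * max 0 (min (z t - lo) (hi - z t))"
  shows "lo < z t1 \<and> z t1 < hi"
proof (rule ccontr)
  assume exit: "\<not> (lo < z t1 \<and> z t1 < hi)"
  define d where "d t = min (z t - lo) (hi - z t)" for t
  define L where "L = max K 1"
  have "0 < L"
    by (simp add: L_def)
  define \<tau>0 where "\<tau>0 = max 0 (t1 - 1 / (2 * L))"
  have \<tau>0: "0 \<le> \<tau>0" "\<tau>0 < t1" "t1 - \<tau>0 \<le> 1 / (2 * L)"
    using \<open>0 < t1\<close> \<open>0 < L\<close> by (auto simp: \<tau>0_def)
  have "continuous_on {\<tau>0..t1} d"
    unfolding d_def by (intro continuous_intros continuous_on_subset[OF z]) (use \<tau>0 in auto)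
  then obtain \<tau> where \<tau>: "\<tau> \<in> {\<tau>0..t1}" and d_max: "\<And>s. s \<in> {\<tau>0..t1} \<Longrightarrow> d s \<le> d \<tau>"
    using continuous_attains_sup[OF compact_Icc] \<tau>0 by (metis atLeastAtMost_iff empty_iff less_eq_real_def)
  (* On [tau, t1] the speed is at most L d(tau), and t1 - tau <= 1/(2L): so z moves by at most
     d(tau)/2 there, and d cannot drop from d(tau) to 0. *)
  have "0 < d \<tau>"
    using inside[OF \<tau>0(1,2)] d_max[of \<tau>0] \<tau>0 unfolding d_def by auto
  have "d t1 \<le> 0"
    using exit unfolding d_def by auto
  have "(g has_integral (z \<tau> - z t1)) {\<tau>..t1}"
    using has_integral_interval_of_primitive[of g "\<lambda>t. z 0 - z t", OF g g] \<tau> \<tau>0 by auto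
  moreover have "\<bar>g s\<bar> \<le> L * d \<tau>" if "s \<in> {\<tau>..t1}" for s
  proof -
    have "\<bar>g s\<bar> \<le> K * max 0 (d s)"
      using speed[of s] that \<tau> \<tau>0 unfolding d_def by auto
    also have "\<dots> \<le> L * max 0 (d s)"
      by (simp add: L_def mult_right_mono)
    also have "\<dots> \<le> L * d \<tau>"
      using d_max[of s] that \<tau> \<open>0 < d \<tau>\<close> \<open>0 < L\<close> by (auto intro!: mult_left_mono)
    finally show ?thesis .
  qed
  ultimately have "\<bar>z \<tau> - z t1\<bar> \<le> L * d \<tau> * (t1 - \<tau>)"
    using has_integral_bound_real[of "L * d \<tau>" "{}" g "z \<tau> - z t1" \<tau> t1] \<open>0 < d \<tau>\<close> \<open>0 < L\<close> \<tau>
    by auto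
  also have "\<dots> \<le> L * d \<tau> * (1 / (2 * L))"
    using \<tau> \<tau>0 \<open>0 < d \<tau>\<close> \<open>0 < L\<close> by (intro mult_left_mono) auto
  also have "\<dots> = d \<tau> / 2"
    using \<open>0 < L\<close> by simp
  finally have "\<bar>z \<tau> - z t1\<bar> \<le> d \<tau> / 2" .
  moreover have "d \<tau> - d t1 \<le> \<bar>z \<tau> - z t1\<bar>"
    unfolding d_def by (simp add: min_def abs_if)
  ultimately show False
    using \<open>0 < d \<tau>\<close> \<open>d t1 \<le> 0\<close> by linarith
qed

lemma stays_in_interval_of_linear_speed_bound:
  fixes z g :: "real \<Rightarrow> real"
  assumes "0 \<le> T" and z: "continuous_on {0..T} z"
    and g: "\<And>t. t \<in> {0..T} \<Longrightarrow> (g has_integral (z 0 - z t)) {0..t}"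
    and speed: "\<And>t. t \<in> {0..T} \<Longrightarrow> \<bar>g t\<bar> \<le> K * max 0 (min (z t - lo) (hi - z t))"
    and "lo < z 0" "z 0 < hi"
  shows "lo < z T \<and> z T < hi"
proof (rule ccontr)
  assume "\<not> (lo < z T \<and> z T < hi)"
  then obtain t1 where t1: "0 < t1" "t1 \<le> T" "z t1 \<notin> {lo<..<hi}"
    and before: "\<And>t. 0 \<le> t \<Longrightarrow> t < t1 \<Longrightarrow> z t \<in> {lo<..<hi}"
    using first_exit_time[OF z open_greaterThanLessThan _ \<open>0 \<le> T\<close>] \<open>lo < z 0\<close> \<open>z 0 < hi\<close>
    by (metis greaterThanLessThan_iff)
  have "lo < z t1 \<and> z t1 < hi"
  proof (rule inside_at_first_exit_of_linear_speed_bound[OF \<open>0 < t1\<close>, where g = g and K = K])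
    show "continuous_on {0..t1} z"
      using continuous_on_subset[OF z] t1(2) by auto
  qed (use before g speed t1(2) in auto)
  with t1(3) show False
    by simp
qed

theorem lemma2p22:
  fixes a b :: real and h k :: nat and v w :: "nat \<Rightarrow> real"
    and f p :: "real \<Rightarrow> real" and \<Theta> :: "real \<Rightarrow> nat \<Rightarrow> real"
  assumes "a < b"
    and "\<forall>i\<in>{1..h}. v i > 0 \<and> w i > 0"
    and "continuous_on UNIV f" and "continuous_on UNIV p"
    and "\<forall>x. p x \<ge> 0" and "{x. p x > 0} = {a<..<b}"
    and "\<forall>i\<in>{1..h+1}. continuous_on {0..} (\<lambda>t. \<Theta> t i)"
    and "\<forall>t\<ge>0. \<forall>i\<in>{1..h+1}.
           ((\<lambda>s. grad (risk a b h v w f p) (\<Theta> s) i) has_integral (\<Theta> 0 i - \<Theta> t i)) {0..t}"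
    and "k \<in> {1..h}"
    and "Iset a b w (\<Theta> 0) k \<noteq> {}"
  shows "\<forall>t\<ge>0. Iset a b w (\<Theta> t) k \<noteq> {}"
proof (intro allI impI)
  fix T :: real
  assume "0 \<le> T"
  have k: "k \<in> {1..h}" and w: "0 < w k" and "a \<le> b"
    using assms(1,2,9) by auto
  have f: "continuous_on {a..b} f" and p: "continuous_on {a..b} p"
    using assms(3,4) by (auto intro: continuous_on_subset)
  have \<Theta>_cont: "continuous_on {0..T} (\<lambda>t. \<Theta> t i)" if "i \<in> {1..h+1}" for i
    by (rule continuous_on_subset[of "{0..}"]) (use assms(7) that in auto)
  then have "continuous_on {0..T} (\<lambda>t. \<Theta> t (h + 1))"
    by simp
  then obtain M where M: "\<And>t x. t \<in> {0..T} \<Longrightarrow> x \<in> {a..b} \<Longrightarrow> \<bar>(realiz h v w (\<Theta> t) x - f x) * p x\<bar> \<le> M"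
    using weighted_residual_bounded[OF _ f p, where v = v and w = w] by blast
  have "- w k * b < \<Theta> T k \<and> \<Theta> T k < 1 - w k * a"
  proof (rule stays_in_interval_of_linear_speed_bound[OF \<open>0 \<le> T\<close>,
        where g = "\<lambda>t. grad (risk a b h v w f p) (\<Theta> t) k" and K = "2 * \<bar>v k\<bar> * M / w k"])
    show "continuous_on {0..T} (\<lambda>t. \<Theta> t k)"
      using \<Theta>_cont k by simp
    show "((\<lambda>s. grad (risk a b h v w f p) (\<Theta> s) k) has_integral (\<Theta> 0 k - \<Theta> t k)) {0..t}"
      if "t \<in> {0..T}" for t
      using assms(8) k that by auto
    show "\<bar>grad (risk a b h v w f p) (\<Theta> t) k\<bar>
            \<le> 2 * \<bar>v k\<bar> * M / w k * max 0 (min (\<Theta> t k - - w k * b) (1 - w k * a - \<Theta> t k))"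
      if "t \<in> {0..T}" for t
      using abs_grad_risk_hidden_le[where w = w and k = k, OF k w \<open>a \<le> b\<close> f p M[OF that]] by simp
    show "- w k * b < \<Theta> 0 k" "\<Theta> 0 k < 1 - w k * a"
      using assms(10) Iset_nonempty_iff[where w = w and k = k, OF assms(1) w] by auto
  qed
  then show "Iset a b w (\<Theta> T) k \<noteq> {}"
    using Iset_nonempty_iff[where w = w and k = k, OF assms(1) w] by simp
qed

end
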